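(* Let $(A,\circ)$ be a permutative algebra and let $(A[[\hbar]],\triangleright_{\hbar},\triangleleft_{\hbar})$ be a diassociative formal deformation of $A$, given by bilinear operations $\triangleright_i,\triangleleft_i:A\otimes A\to A$ ($i\geq 0$). Define a bilinear operation $[\cdot,\cdot]:A\otimes A\to A$ by $[x,y]=x\triangleright_1 y-y\triangleleft_1 x$ for all $x,y\in A$. Then $(A,\circ,[\cdot,\cdot])$ is a dual pre-Poisson algebra.
   Context: Work over a field $\mathbb{F}$ of characteristic $0$. A permutative algebra is a vector space with a bilinear product $\circ$ satisfying $x\circ(y\circ z)=(x\circ y)\circ z=(y\circ x)\circ z$. A dialgebra (diassociative algebra) over a commutative ring is a module with two associative bilinear products $\triangleright,\triangleleft$ satisfying $(x\triangleleft y)\triangleleft z=x\triangleleft(y\triangleright z)$, $(x\triangleright y)\triangleleft z=x\triangleright(y\triangleleft z)$, $(x\triangleleft y)\triangleright z=x\triangleright(y\triangleright z)$. A diassociative formal deformation of a permutative algebra $(A,\circ)$ is a sequence of bilinear operations $\triangleright_i,\triangleleft_i:A\otimes A\to A$, $i\geq0$, with $x\triangleright_0 y:=x\circ y=:y\triangleleft_0 x$ for all $x,y\in A$, such that $(A[[\hbar]],\triangleright_\hbar,\triangleleft_\hbar)$ is a dialgebra over $\mathbb{F}[[\hbar]]$, where $\triangleright_\hbar,\triangleleft_\hbar$ are the $\mathbb{F}[[\hbar]]$-bilinear operations determined by $x\triangleright_\hbar y=\sum_{i\ge0}(x\triangleright_i y)\hbar^i$ and $x\triangleleft_\hbar y=\sum_{i\ge0}(x\triangleleft_i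 y)\hbar^i$ for $x,y\in A$. A dual pre-Poisson algebra is a vector space $A$ with bilinear operations $\circ,[\cdot,\cdot]$ such that $(A,\circ)$ is permutative, $[x,[y,z]]=[[x,y],z]+[y,[x,z]]$, $[x,y\circ z]=[x,y]\circ z+y\circ[x,z]$, $[x\circ y,z]=x\circ[y,z]+y\circ[x,z]$ and $[x,y]\circ z=-[y,x]\circ z$ for all $x,y,z$. *)

theory Defs
  imports Complex_Main
begin

definition bilinear_op :: "('k::field \<Rightarrow> 'a::ab_group_add \<Rightarrow> 'a) \<Rightarrow> ('a \<Rightarrow> 'a \<Rightarrow> 'a) \<Rightarrow> bool" where
  "bilinear_op scale f \<longleftrightarrow>
     (\<forall>x. Vector_Spaces.linear scale scale (\<lambda>y. f x y)) \<and> (\<forall>y. Vector_Spaces.linear scale scale (\<lambda>x. f x y))"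

definition permutative_algebra :: "('k::field \<Rightarrow> 'a::ab_group_add \<Rightarrow> 'a) \<Rightarrow> ('a \<Rightarrow> 'a \<Rightarrow> 'a) \<Rightarrow> bool" where
  "permutative_algebra scale m \<longleftrightarrow> vector_space scale \<and> bilinear_op scale m \<and>
     (\<forall>x y z. m x (m y z) = m (m x y) z \<and> m (m x y) z = m (m y x) z)"

text \<open>Formal power series A[[h]] are represented as coefficient sequences nat => A.
  Given bilinear operations op_i (i >= 0), the induced F[[h]]-bilinear operation on A[[h]]
  determined by  x op_h y = sum_i (x op_i y) h^i  for x, y in A is the Cauchy-type product
  (X op_h Y)_n = sum over i+j+k = n of (X_i op_k Y_j).\<close>
definition hbar_op :: "(nat \<Rightarrow> 'a \<Rightarrow> 'a \<Rightarrow> 'a::comm_monoid_add) \<Rightarrow> (nat \<Rightarrow> 'a) \<Rightarrow> (nat \<Rightarrow> 'a) \<Rightarrow> (nat \<Rightarrow> 'a)" where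
  "hbar_op op X Y n = (\<Sum>i\<le>n. \<Sum>j\<le>n - i. op (n - i - j) (X i) (Y j))"

definition dialgebra_axioms :: "('b \<Rightarrow> 'b \<Rightarrow> 'b) \<Rightarrow> ('b \<Rightarrow> 'b \<Rightarrow> 'b) \<Rightarrow> bool" where
  "dialgebra_axioms r l \<longleftrightarrow>
     (\<forall>x y z. r (r x y) z = r x (r y z)) \<and>
     (\<forall>x y z. l (l x y) z = l x (l y z)) \<and>
     (\<forall>x y z. l (l x y) z = l x (r y z)) \<and>
     (\<forall>x y z. l (r x y) z = r x (l y z)) \<and>
     (\<forall>x y z. r (l x y) z = r x (r y z))"

definition diassociative_formal_deformation ::
  "('k::field \<Rightarrow> 'a::ab_group_add \<Rightarrow> 'a) \<Rightarrow> ('a \<Rightarrow> 'a \<Rightarrow> 'a) \<Rightarrow>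
   (nat \<Rightarrow> 'a \<Rightarrow> 'a \<Rightarrow> 'a) \<Rightarrow> (nat \<Rightarrow> 'a \<Rightarrow> 'a \<Rightarrow> 'a) \<Rightarrow> bool" where
  "diassociative_formal_deformation scale m R L \<longleftrightarrow>
     (\<forall>i. bilinear_op scale (R i) \<and> bilinear_op scale (L i)) \<and>
     (\<forall>x y. R 0 x y = m x y \<and> L 0 y x = m x y) \<and>
     dialgebra_axioms (hbar_op R) (hbar_op L)"

definition dual_pre_Poisson :: "('k::field \<Rightarrow> 'a::ab_group_add \<Rightarrow> 'a) \<Rightarrow> ('a \<Rightarrow> 'a \<Rightarrow> 'a) \<Rightarrow> ('a \<Rightarrow> 'a \<Rightarrow> 'a) \<Rightarrow> bool" where
  "dual_pre_Poisson scale m b \<longleftrightarrow> permutative_algebra scale m \<and> bilinear_op scale b \<and>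
     (\<forall>x y z. b x (b y z) = b (b x y) z + b y (b x z)) \<and>
     (\<forall>x y z. b x (m y z) = m (b x y) z + m y (b x z)) \<and>
     (\<forall>x y z. b (m x y) z = m x (b y z) + m y (b x z)) \<and>
     (\<forall>x y z. m (b x y) z = - m (b y x) z)"

end

(* Evaluate the dialgebra axioms of the deformation on constant series and compare
   coefficients.  In degree one the axioms become linear relations between the
   first-order products and the product of A; suitable combinations of them are the two derivation rules and the left antisymmetry of
   [x, y] = x \<triangleright>\<^sub>1 y - y \<triangleleft>\<^sub>1 x.  For the Leibniz rule, recall that
   X \<triangleright> Y - Y \<triangleleft> X is a Leibniz bracket on every dialgebra, in particular on A[[h]].
   On constant series its degree-zero part x \<circ> y - x \<circ> y vanishes, so the degree-two
   coefficient of a nested bracket of constants is the nested first-order bracket. *)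

theory Submission
  imports Defs "HOL-Library.Function_Algebras"
begin

lemma
  assumes "bilinear_op s f"
  shows bilinear_op_diff_left: "f (x - y) z = f x z - f y z"
    and bilinear_op_diff_right: "f x (y - z) = f x y - f x z"
    and bilinear_op_zero_left: "f 0 z = 0"
    and bilinear_op_zero_right: "f x 0 = 0"
proof -
  have left: "module_hom s s (\<lambda>x. f x z)" and right: "module_hom s s (f x)"
    using assms by (simp_all add: bilinear_op_def module_hom_iff_linear)
  show "f (x - y) z = f x z - f y z" "f 0 z = 0"
    using module_hom.diff[OF left] module_hom.zero[OF left] by simp_all
  show "f x (y - z) = f x y - f x z" "f x 0 = 0"
    using module_hom.diff[OF right] module_hom.zero[OF right] by simp_all
qed

definition dialgebra_bracket :: "('b::minus \<Rightarrow> 'b \<Rightarrow> 'b) \<Rightarrow> ('b \<Rightarrow> 'b \<Rightarrow> 'b) \<Rightarrow> 'b \<Rightarrow> 'b \<Rightarrow> 'b" where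
  "dialgebra_bracket r l x y = r x y - l y x"

lemma bilinear_op_dialgebra_bracket:
  assumes "bilinear_op s r" and "bilinear_op s l"
  shows "bilinear_op s (dialgebra_bracket r l)"
  using assms
  by (auto simp: bilinear_op_def dialgebra_bracket_def linear_iff_module_hom module_hom_iff
      module.scale_right_diff_distrib)

lemma dialgebra_bracket_leibniz:
  fixes r l :: "'b::ab_group_add \<Rightarrow> 'b \<Rightarrow> 'b"
  assumes "dialgebra_axioms r l"
    and "\<And>a b c. r (a - b) c = r a c - r b c" "\<And>a b c. r c (a - b) = r c a - r c b"
    and "\<And>a b c. l (a - b) c = l a c - l b c" "\<And>a b c. l c (a - b) = l c a - l c b"
  defines "br \<equiv> dialgebra_bracket r l"
  shows "br x (br y z) = br (br x y) z + br y (br x z)"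
proof -
  obtain rr_rr: "\<And>x y z. r (r x y) z = r x (r y z)"
    and ll_ll: "\<And>x y z. l (l x y) z = l x (l y z)"
    and ll_lr: "\<And>x y z. l (l x y) z = l x (r y z)"
    and lr_rl: "\<And>x y z. l (r x y) z = r x (l y z)"
    and rl_rr: "\<And>x y z. r (l x y) z = r x (r y z)"
    using assms(1) unfolding dialgebra_axioms_def by blast
  show ?thesis
    unfolding br_def dialgebra_bracket_def
    by (simp add: assms(2-5) rr_rr ll_ll[symmetric] ll_lr[symmetric] lr_rl[symmetric] rl_rr
        algebra_simps)
qed

lemma hbar_op_diff_left:
  fixes op :: "nat \<Rightarrow> 'a::ab_group_add \<Rightarrow> 'a \<Rightarrow> 'a"
  assumes "\<And>k a b c. op k (a - b) c = op k a c - op k b c"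
  shows "hbar_op op (X - Y) Z = hbar_op op X Z - hbar_op op Y Z"
  unfolding hbar_op_def fun_eq_iff by (simp add: assms sum_subtractf)

lemma hbar_op_diff_right:
  fixes op :: "nat \<Rightarrow> 'a::ab_group_add \<Rightarrow> 'a \<Rightarrow> 'a"
  assumes "\<And>k a b c. op k c (a - b) = op k c a - op k c b"
  shows "hbar_op op Z (X - Y) = hbar_op op Z X - hbar_op op Z Y"
  unfolding hbar_op_def fun_eq_iff by (simp add: assms sum_subtractf)

definition hconst :: "'a::zero \<Rightarrow> nat \<Rightarrow> 'a" where
  "hconst x = (\<lambda>n. if n = 0 then x else 0)"

lemma hbar_op_hconst_left:
  fixes op :: "nat \<Rightarrow> 'a::ab_group_add \<Rightarrow> 'a \<Rightarrow> 'a"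
  assumes "\<And>k a. op k 0 a = 0"
  shows "hbar_op op (hconst x) Y n = (\<Sum>j\<le>n. op (n - j) x (Y j))"
proof -
  have "hbar_op op (hconst x) Y n = (\<Sum>i\<le>n. if i = 0 then \<Sum>j\<le>n - i. op (n - i - j) x (Y j) else 0)"
    unfolding hbar_op_def by (rule sum.cong) (auto simp: hconst_def assms)
  then show ?thesis by simp
qed

lemma hbar_op_hconst_right:
  fixes op :: "nat \<Rightarrow> 'a::ab_group_add \<Rightarrow> 'a \<Rightarrow> 'a"
  assumes "\<And>k a. op k a 0 = 0"
  shows "hbar_op op X (hconst z) n = (\<Sum>i\<le>n. op (n - i) (X i) z)"
proof -
  have "(\<Sum>j\<le>k. op (k - j) a (hconst z j)) = op k a z" for k a
  proof -
    have "(\<Sum>j\<le>k. op (k - j) a (hconst z j)) = (\<Sum>j\<le>k. if j = 0 then op k a z else 0)"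
      by (rule sum.cong) (auto simp: hconst_def assms)
    then show ?thesis by simp
  qed
  then show ?thesis unfolding hbar_op_def by (simp del: diff_diff_left)
qed

lemma hbar_op_hconst:
  fixes op :: "nat \<Rightarrow> 'a::ab_group_add \<Rightarrow> 'a \<Rightarrow> 'a"
  assumes "\<And>k a. op k a 0 = 0" and "\<And>k a. op k 0 a = 0"
  shows "hbar_op op (hconst x) (hconst y) = (\<lambda>n. op n x y)"
proof
  fix n
  have "hbar_op op (hconst x) (hconst y) n = (\<Sum>i\<le>n. if i = 0 then op n x y else 0)"
    unfolding hbar_op_hconst_right[of op, OF assms(1)] by (rule sum.cong) (auto simp: hconst_def assms(2))
  then show "hbar_op op (hconst x) (hconst y) n = op n x y" by simp
qed

context
  fixes scale :: "'k::field \<Rightarrow> 'a::ab_group_add \<Rightarrow> 'a"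
    and m :: "'a \<Rightarrow> 'a \<Rightarrow> 'a"
    and R L :: "nat \<Rightarrow> 'a \<Rightarrow> 'a \<Rightarrow> 'a"
  assumes deformation: "diassociative_formal_deformation scale m R L"
begin

lemma deformation_bilinear: "bilinear_op scale (R i)" "bilinear_op scale (L i)"
  using deformation unfolding diassociative_formal_deformation_def by blast+

lemma deformation_order0: "R 0 x y = m x y" "L 0 y x = m x y"
  using deformation unfolding diassociative_formal_deformation_def by blast+

lemma deformation_dialgebra: "dialgebra_axioms (hbar_op R) (hbar_op L)"
  using deformation unfolding diassociative_formal_deformation_def by blast

lemma
  shows deformation_rr_rr: "hbar_op R (hbar_op R X Y) Z = hbar_op R X (hbar_op R Y Z)"
    and deformation_ll_lr: "hbar_op L (hbar_op L X Y) Z = hbar_op L X (hbar_op R Y Z)"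
    and deformation_lr_rl: "hbar_op L (hbar_op R X Y) Z = hbar_op R X (hbar_op L Y Z)"
    and deformation_rl_rr: "hbar_op R (hbar_op L X Y) Z = hbar_op R X (hbar_op R Y Z)"
  using deformation_dialgebra unfolding dialgebra_axioms_def by blast+

lemmas deformation_diff =
  bilinear_op_diff_left[OF deformation_bilinear(1)] bilinear_op_diff_right[OF deformation_bilinear(1)]
  bilinear_op_diff_left[OF deformation_bilinear(2)] bilinear_op_diff_right[OF deformation_bilinear(2)]

lemmas deformation_zero =
  bilinear_op_zero_left[OF deformation_bilinear(1)] bilinear_op_zero_right[OF deformation_bilinear(1)]
  bilinear_op_zero_left[OF deformation_bilinear(2)] bilinear_op_zero_right[OF deformation_bilinear(2)]

lemmas deformation_hconst_simps =
  hbar_op_hconst[of R, OF deformation_zero(2,1)] hbar_op_hconst[of L, OF deformation_zero(4,3)]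
  hbar_op_hconst_left[of R, OF deformation_zero(1)] hbar_op_hconst_left[of L, OF deformation_zero(3)]
  hbar_op_hconst_right[of R, OF deformation_zero(2)] hbar_op_hconst_right[of L, OF deformation_zero(4)]
  deformation_order0

(* A name such as
   lr_rl records the outer and inner product on each side of the axiom, with r for
   \<triangleright> and l for \<triangleleft>. *)

lemma order1_rr_rr: "R 1 (m x y) z + m (R 1 x y) z = R 1 x (m y z) + m x (R 1 y z)"
  using fun_cong[OF deformation_rr_rr[of "hconst x" "hconst y" "hconst z"], of 1]
  by (simp add: deformation_hconst_simps)

lemma order1_ll_lr: "L 1 x (m y z) + m (R 1 y z) x = L 1 (m y x) z + m z (L 1 x y)"
  using fun_cong[OF deformation_ll_lr[of "hconst x" "hconst y" "hconst z"], of 1]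
  by (simp add: deformation_hconst_simps)

lemma order1_lr_rl: "L 1 (m x y) z + m z (R 1 x y) = R 1 x (m z y) + m x (L 1 y z)"
  using fun_cong[OF deformation_lr_rl[of "hconst x" "hconst y" "hconst z"], of 1]
  by (simp add: deformation_hconst_simps)

lemma order1_rl_rr: "R 1 x (m y z) + m x (R 1 y z) = R 1 (m y x) z + m (L 1 x y) z"
  using fun_cong[OF deformation_rl_rr[of "hconst x" "hconst y" "hconst z"], of 1]
  by (simp add: deformation_hconst_simps)

lemma order1_rr_rl: "R 1 (m x y) z + m (R 1 x y) z = R 1 (m y x) z + m (L 1 x y) z"
  unfolding order1_rr_rr by (rule order1_rl_rr)

lemmas deformation_m_diff = deformation_diff(1,2)[of 0, unfolded deformation_order0]

lemma order1_bracket_antisymmetric_left: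
  "m (R 1 x y - L 1 y x) z = - m (R 1 y x - L 1 x y) z"
proof -
  have "m (R 1 x y - L 1 y x) z + m (R 1 y x - L 1 x y) z =
      ((R 1 (m x y) z + m (R 1 x y) z) - (R 1 (m y x) z + m (L 1 x y) z)) +
      ((R 1 (m y x) z + m (R 1 y x) z) - (R 1 (m x y) z + m (L 1 y x) z))"
    by (simp add: deformation_m_diff algebra_simps)
  also have "\<dots> = 0" unfolding order1_rr_rl[of x y z] order1_rr_rl[of y x z] by simp
  finally show ?thesis by (simp add: eq_neg_iff_add_eq_0)
qed

lemma order1_bracket_derivation_right:
  "R 1 x (m y z) - L 1 (m y z) x = m (R 1 x y - L 1 y x) z + m y (R 1 x z - L 1 z x)"
proof -
  have "R 1 x (m y z) - L 1 (m y z) x - (m (R 1 x y - L 1 y x) z + m y (R 1 x z - L 1 z x)) =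
      ((R 1 (m x y) z + m (L 1 y x) z) - (R 1 y (m x z) + m y (R 1 x z))) -
      ((R 1 (m x y) z + m (R 1 x y) z) - (R 1 x (m y z) + m x (R 1 y z))) -
      ((L 1 (m y z) x + m x (R 1 y z)) - (R 1 y (m x z) + m y (L 1 z x)))"
    by (simp add: deformation_m_diff algebra_simps)
  also have "\<dots> = 0"
    unfolding order1_rl_rr[of y x z] order1_rr_rr[of x y z] order1_lr_rl[of y z x] by simp
  finally show ?thesis by simp
qed

lemma order1_bracket_derivation_left:
  "R 1 (m x y) z - L 1 z (m x y) = m x (R 1 y z - L 1 z y) + m y (R 1 x z - L 1 z x)"
proof -
  have "R 1 (m x y) z - L 1 z (m x y) - (m x (R 1 y z - L 1 z y) + m y (R 1 x z - L 1 z x)) =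
      ((R 1 (m x y) z + m (R 1 x y) z) - (R 1 x (m y z) + m x (R 1 y z))) -
      ((L 1 (m x z) y + m y (R 1 x z)) - (R 1 x (m y z) + m x (L 1 z y))) +
      ((L 1 (m x z) y + m y (L 1 z x)) - (L 1 z (m x y) + m (R 1 x y) z))"
    by (simp add: deformation_m_diff algebra_simps)
  also have "\<dots> = 0"
    unfolding order1_rr_rr[of x y z] order1_lr_rl[of x z y] order1_ll_lr[of z x y] by simp
  finally show ?thesis by simp
qed

lemma order0_bracket: "dialgebra_bracket (R 0) (L 0) x y = 0"
  by (simp add: dialgebra_bracket_def deformation_order0)

lemma order2_bracket_hconst_left:
  assumes "Y 0 = 0"
  shows "dialgebra_bracket (hbar_op R) (hbar_op L) (hconst x) Y 2 = dialgebra_bracket (R 1) (L 1) x (Y 1)"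
  using assms
  by (simp add: dialgebra_bracket_def deformation_hconst_simps deformation_zero numeral_2_eq_2)

lemma order2_bracket_hconst_right:
  assumes "X 0 = 0"
  shows "dialgebra_bracket (hbar_op R) (hbar_op L) X (hconst z) 2 = dialgebra_bracket (R 1) (L 1) (X 1) z"
  using assms
  by (simp add: dialgebra_bracket_def deformation_hconst_simps deformation_zero numeral_2_eq_2)

lemma hbar_bracket_hconst:
  "dialgebra_bracket (hbar_op R) (hbar_op L) (hconst x) (hconst y) = (\<lambda>n. dialgebra_bracket (R n) (L n) x y)"
  by (simp add: dialgebra_bracket_def deformation_hconst_simps fun_diff_def)

lemma order1_bracket_leibniz:
  defines "br \<equiv> dialgebra_bracket (R 1) (L 1)"
  shows "br x (br y z) = br (br x y) z + br y (br x z)"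
proof -
  let ?br = "dialgebra_bracket (hbar_op R) (hbar_op L)"
  have "?br X (?br Y Z) = ?br (?br X Y) Z + ?br Y (?br X Z)" for X Y Z
    by (rule dialgebra_bracket_leibniz[OF deformation_dialgebra])
      (simp_all add: hbar_op_diff_left hbar_op_diff_right deformation_diff)
  from fun_cong[OF this[of "hconst x" "hconst y" "hconst z"], of 2] show ?thesis
    unfolding br_def plus_fun_def hbar_bracket_hconst
    by (simp add: order2_bracket_hconst_left order2_bracket_hconst_right order0_bracket)
qed

end

theorem theorem2p25:
  fixes scale :: "'k::field_char_0 \<Rightarrow> 'a::ab_group_add \<Rightarrow> 'a"
    and m :: "'a \<Rightarrow> 'a \<Rightarrow> 'a"
    and R L :: "nat \<Rightarrow> 'a \<Rightarrow> 'a \<Rightarrow> 'a"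
  assumes "permutative_algebra scale m"
    and "diassociative_formal_deformation scale m R L"
  shows "dual_pre_Poisson scale m (\<lambda>x y. R 1 x y - L 1 y x)"
proof -
  have "bilinear_op scale (dialgebra_bracket (R 1) (L 1))"
    using deformation_bilinear[OF assms(2)] by (rule bilinear_op_dialgebra_bracket)
  then show ?thesis
    using assms(1) order1_bracket_leibniz[OF assms(2)]
      order1_bracket_derivation_right[OF assms(2)] order1_bracket_derivation_left[OF assms(2)]
      order1_bracket_antisymmetric_left[OF assms(2)]
    unfolding dual_pre_Poisson_def dialgebra_bracket_def[abs_def] by blast
qed

end
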